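(* Let $V$ be a real vector space of dimension $n\ge 3$ and let $R\in\mathfrak{r}(V)$. Then $R\in\mathfrak{a}(V)\oplus\mathfrak{s}(V)$ if and only if $R^*\in\mathfrak{r}(V)$.
   Context: $\mathfrak{r}(V)$ is the space of $(0,4)$-tensors $R$ on $V$ satisfying $R(x,y,z,w)=-R(y,x,z,w)$ and $R(x,y,z,w)+R(y,z,x,w)+R(z,x,y,w)=0$ for all $x,y,z,w\in V$ (generalized curvature tensors). For a $(0,4)$-tensor $R$ its conjugate is $R^*(x,y,z,w):=-R(x,y,w,z)$. $\mathfrak{a}(V)=\{R\in\mathfrak{r}(V): R(x,y,z,w)=-R(x,y,w,z)\}$ (algebraic curvature tensors) and $\mathfrak{s}(V)=\{R\in\mathfrak{r}(V): R(x,y,z,w)=R(x,y,w,z)\}$. *)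

theory Defs
  imports "HOL-Analysis.Analysis"
begin

definition tensor4 :: "('v::real_vector \<Rightarrow> 'v \<Rightarrow> 'v \<Rightarrow> 'v \<Rightarrow> real) \<Rightarrow> bool" where
  "tensor4 R \<longleftrightarrow>
     (\<forall>y z w. linear (\<lambda>x. R x y z w)) \<and>
     (\<forall>x z w. linear (\<lambda>y. R x y z w)) \<and>
     (\<forall>x y w. linear (\<lambda>z. R x y z w)) \<and>
     (\<forall>x y z. linear (\<lambda>w. R x y z w))"

definition gen_curv :: "('v::real_vector \<Rightarrow> 'v \<Rightarrow> 'v \<Rightarrow> 'v \<Rightarrow> real) \<Rightarrow> bool" where
  "gen_curv R \<longleftrightarrow> tensor4 R \<and>
     (\<forall>x y z w. R x y z w = - R y x z w) \<and>
     (\<forall>x y z w. R x y z w + R y z x w + R z x y w = 0)"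

definition conj_tensor :: "('v \<Rightarrow> 'v \<Rightarrow> 'v \<Rightarrow> 'v \<Rightarrow> real) \<Rightarrow> ('v \<Rightarrow> 'v \<Rightarrow> 'v \<Rightarrow> 'v \<Rightarrow> real)" where
  "conj_tensor R = (\<lambda>x y z w. - R x y w z)"

definition alg_curv :: "('v::real_vector \<Rightarrow> 'v \<Rightarrow> 'v \<Rightarrow> 'v \<Rightarrow> real) \<Rightarrow> bool" where
  "alg_curv R \<longleftrightarrow> gen_curv R \<and> (\<forall>x y z w. R x y z w = - R x y w z)"

definition sym_curv :: "('v::real_vector \<Rightarrow> 'v \<Rightarrow> 'v \<Rightarrow> 'v \<Rightarrow> real) \<Rightarrow> bool" where
  "sym_curv R \<longleftrightarrow> gen_curv R \<and> (\<forall>x y z w. R x y z w = R x y w z)"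

text \<open>Membership in a(V) + s(V) (the sum is direct since a(V) \<inter> s(V) = 0).\<close>
definition in_a_plus_s :: "('v::real_vector \<Rightarrow> 'v \<Rightarrow> 'v \<Rightarrow> 'v \<Rightarrow> real) \<Rightarrow> bool" where
  "in_a_plus_s R \<longleftrightarrow> (\<exists>A S. alg_curv A \<and> sym_curv S \<and> R = (\<lambda>x y z w. A x y z w + S x y z w))"

end

theory Submission
  imports Defs
begin

text \<open>Conjugation is a linear involution on (0,4)-tensors, and within \<open>\<frak>r(V)\<close> the spaces
  \<open>\<frak>a(V)\<close> and \<open>\<frak>s(V)\<close> are exactly its \<open>+1\<close> and \<open>-1\<close> eigenspaces. Hence \<open>R = A + S\<close> forces
  \<open>R\<^sup>* = A - S \<in> \<frak>r(V)\<close>, and conversely, if \<open>R\<^sup>* \<in> \<frak>r(V)\<close>, then \<open>R = (R + R\<^sup>*)/2 + (R - R\<^sup>*)/2\<close> is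
  the required splitting. The argument never uses the dimension hypothesis.\<close>

lemma linear_lincomb:
  fixes f g :: "'a::real_vector \<Rightarrow> real"
  assumes "linear f" "linear g"
  shows "linear (\<lambda>x. a * f x + b * g x)"
  using assms unfolding linear_iff by (auto simp: algebra_simps)

lemma tensor4_lincomb:
  assumes "tensor4 R" "tensor4 T"
  shows "tensor4 (\<lambda>x y z w. a * R x y z w + b * T x y z w)"
  using assms unfolding tensor4_def by (auto intro!: linear_lincomb)

lemma gen_curv_lincomb:
  assumes R: "gen_curv R" and T: "gen_curv T"
  shows "gen_curv (\<lambda>x y z w. a * R x y z w + b * T x y z w)"
  unfolding gen_curv_def
proof (intro conjI allI)
  show "tensor4 (\<lambda>x y z w. a * R x y z w + b * T x y z w)"
    using R T unfolding gen_curv_def by (blast intro: tensor4_lincomb)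
  fix x y z w
  have "R x y z w = - R y x z w" "T x y z w = - T y x z w"
    and "R x y z w + R y z x w + R z x y w = 0" "T x y z w + T y z x w + T z x y w = 0"
    using R T unfolding gen_curv_def by blast+
  then show "a * R x y z w + b * T x y z w = - (a * R y x z w + b * T y x z w)"
    and "a * R x y z w + b * T x y z w + (a * R y z x w + b * T y z x w)
           + (a * R z x y w + b * T z x y w) = 0"
    by (simp_all add: algebra_simps flip: distrib_left)
qed

lemma conj_tensor_conj_tensor [simp]: "conj_tensor (conj_tensor R) = R"
  unfolding conj_tensor_def by simp

lemma conj_tensor_lincomb:
  "conj_tensor (\<lambda>x y z w. a * R x y z w + b * T x y z w)
     = (\<lambda>x y z w. a * conj_tensor R x y z w + b * conj_tensor T x y z w)"
  unfolding conj_tensor_def by (simp add: fun_eq_iff algebra_simps)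

lemma alg_curv_iff_conj_tensor_eq: "alg_curv A \<longleftrightarrow> gen_curv A \<and> conj_tensor A = A"
  unfolding alg_curv_def conj_tensor_def fun_eq_iff by metis

lemma sym_curv_iff_conj_tensor_eq_uminus:
  "sym_curv S \<longleftrightarrow> gen_curv S \<and> conj_tensor S = (\<lambda>x y z w. - S x y z w)"
  unfolding sym_curv_def conj_tensor_def fun_eq_iff by (simp, metis)

theorem lemma2p10:
  fixes R :: "'v::euclidean_space \<Rightarrow> 'v \<Rightarrow> 'v \<Rightarrow> 'v \<Rightarrow> real"
  assumes "DIM('v) \<ge> 3"
    and "gen_curv R"
  shows "in_a_plus_s R \<longleftrightarrow> gen_curv (conj_tensor R)"
proof
  assume "in_a_plus_s R"
  then obtain A S where A: "alg_curv A" and S: "sym_curv S"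
    and R: "R = (\<lambda>x y z w. 1 * A x y z w + 1 * S x y z w)"
    unfolding in_a_plus_s_def by auto
  have "conj_tensor R = (\<lambda>x y z w. 1 * A x y z w + (-1) * S x y z w)"
    using A S unfolding R conj_tensor_lincomb alg_curv_iff_conj_tensor_eq
      sym_curv_iff_conj_tensor_eq_uminus by simp
  moreover have "gen_curv A" "gen_curv S"
    using A S unfolding alg_curv_def sym_curv_def by auto
  ultimately show "gen_curv (conj_tensor R)"
    by (simp only: gen_curv_lincomb)
next
  assume conj: "gen_curv (conj_tensor R)"
  define A where "A = (\<lambda>x y z w. 1/2 * R x y z w + 1/2 * conj_tensor R x y z w)"
  define S where "S = (\<lambda>x y z w. 1/2 * R x y z w + (-1/2) * conj_tensor R x y z w)"
  have "gen_curv A" "gen_curv S"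
    unfolding A_def S_def using assms(2) conj by (rule gen_curv_lincomb)+
  moreover have "conj_tensor A = A" "conj_tensor S = (\<lambda>x y z w. - S x y z w)"
    unfolding A_def S_def conj_tensor_lincomb by (simp_all add: fun_eq_iff)
  ultimately have "alg_curv A" "sym_curv S"
    unfolding alg_curv_iff_conj_tensor_eq sym_curv_iff_conj_tensor_eq_uminus by simp_all
  moreover have "R = (\<lambda>x y z w. A x y z w + S x y z w)"
    unfolding A_def S_def by (simp add: fun_eq_iff)
  ultimately show "in_a_plus_s R"
    unfolding in_a_plus_s_def by (intro exI conjI)
qed

end
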